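(* Let $f,g_1,\dots,g_m,h_1,\dots,h_l\in\mathbb{R}[\mathbf{x}]$, $g=\{g_i\}_{i\in[m]}$, $h=\{h_j\}_{j\in[l]}$, and consider the polynomial optimization problem (POP) of minimizing $f$ over $S(g)\cap V(h)$. 1. For every integer $k\ge k_{\min}$ the following conditions are equivalent: (a) $(0,\infty)\subseteq Q_k^\circ(g)+I_k(h)$; (b) $\delta\in Q_k^\circ(g)+I_k(h)$ for every $\delta>0$; (c) $1\in Q_k^\circ(g)+I_k(h)$. If these conditions hold for all integers $k\ge k_{\min}$, then the POP has the constant trace property (CTP). 2. Assume that $h=\emptyset$ and that $S(g)$ has nonempty interior. Then the POP has CTP if and only if $(0,\infty)\subseteq Q_k^\circ(g)$ for every integer $k\ge k_{\min}$.
   Context: $\mathbf{x}=(x_1,\dots,x_n)$; $\mathbb{R}[\mathbf{x}]_d$ denotes polynomials of degree at most $d$, $\Sigma[\mathbf{x}]_d$ sums of squares of polynomials of degree at most $d$. For $p\in\mathbb{R}[\mathbf{x}]$, $\lceil p\rceil:=\lceil \deg(p)/2\rceil$. $\mathbb{N}^n_d:=\{\alpha\in\mathbb{N}^n:|\alpha|\le d\}$, $s(d):=\binom{n+d}{n}$, and $\mathbf{v}_d(\mathbf{x})=(\mathbf{x}^\alpha)_{\alpha\in\mathbb{N}^n_d}$ is the vector of monomials of degree at most $d$ (graded lexicographic order). $S(g):=\{\mathbf{x}\in\mathbb{R}^n: g_i(\mathbf{x})\ge0,\ i\in[m]\}$, $V(h):=\{\mathbf{x}\in\mathbb{R}^n:h_j(\mathbf{x})=0,\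 j\in[l]\}$. $k_{\min}:=\max\{\lceil f\rceil,\lceil g_i\rceil\ (i\in[m]),\lceil h_j\rceil\ (j\in[l])\}$. $Q_k^\circ(g):=\{\mathbf{v}_k^\top\mathbf{G}_0\mathbf{v}_k+\sum_{i\in[m]}g_i\mathbf{v}_{k-\lceil g_i\rceil}^\top\mathbf{G}_i\mathbf{v}_{k-\lceil g_i\rceil}:\ \mathbf{G}_i \text{ real symmetric positive definite},\ i\in\{0\}\cup[m]\}$ (interior of the truncated quadratic module). $I_k(h):=\{\sum_{j\in[l]}\psi_jh_j:\ \psi_j\in\mathbb{R}[\mathbf{x}]_{2(k-\lceil h_j\rceil)}\}$ (with $I_k(\emptyset)=\{0\}$). For $\mathbf{y}=(y_\alpha)_{\alpha\in\mathbb{N}^n_{2k}}$: the moment matrix $\mathbf{M}_d(\mathbf{y})=(y_{\alpha+\beta})_{\alpha,\beta\in\mathbb{N}^n_d}$ and, for $q=\sum_\gamma q_\gamma\mathbf{x}^\gamma$, the localizing matrix $\mathbf{M}_d(q\,\mathbf{y})=(\sum_\gamma q_\gamma y_{\alpha+\beta+\gamma})_{\alpha,\beta\in\mathbb{N}^n_d}$. $\mathcal{S}_k$ is the set of real symmetric block-diagonal matrices $\mathrm{diag}(\mathbf{X}_0,\dots,\mathbf{X}_m)$ with $\mathbf{X}_0$ of size $s(k)$ and $\mathbf{X}_i$ of size $s(k-\lceil g_i\rceil)$; $\mathbf{D}_k(\mathbf{y}):=\mathrm{diag}(\mathbf{M}_k(\mathbf{y}),\mathbf{M}_{k-\lceil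 g_1\rceil}(g_1\mathbf{y}),\dots,\mathbf{M}_{k-\lceil g_m\rceil}(g_m\mathbf{y}))\in\mathcal{S}_k$. CTP: the POP has CTP if for every integer $k\ge k_{\min}$ there exist $a_k>0$ and a positive definite $\mathbf{P}_k\in\mathcal{S}_k$ such that every $\mathbf{y}\in\mathbb{R}^{s(2k)}$ with $\mathbf{M}_{k-\lceil h_j\rceil}(h_j\mathbf{y})=0$ for all $j\in[l]$ and $y_{\mathbf{0}}=1$ satisfies $\mathrm{trace}(\mathbf{P}_k\mathbf{D}_k(\mathbf{y})\mathbf{P}_k)=a_k$. *)

theory Defs
  imports "HOL-Analysis.Analysis" "HOL-Library.Poly_Mapping"
begin

text \<open>Real polynomials in the variables indexed by the finite type 'n
  (so n = CARD('n)): finitely supported maps from exponent vectors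
  (finitely supported maps 'n \<Rightarrow> nat) to real coefficients.\<close>

type_synonym 'n rpoly = "('n \<Rightarrow>\<^sub>0 nat) \<Rightarrow>\<^sub>0 real"

definition mdeg :: "('n \<Rightarrow>\<^sub>0 nat) \<Rightarrow> nat" where
  "mdeg \<alpha> = (\<Sum>i\<in>Poly_Mapping.keys \<alpha>. Poly_Mapping.lookup \<alpha> i)"

definition pdeg :: "'n rpoly \<Rightarrow> nat" where
  "pdeg p = (if p = 0 then 0 else Max (mdeg ` Poly_Mapping.keys p))"

definition pceil :: "'n rpoly \<Rightarrow> nat" where
  "pceil p = (pdeg p + 1) div 2"

definition peval :: "'n::finite rpoly \<Rightarrow> ('n \<Rightarrow> real) \<Rightarrow> real" where
  "peval p x = (\<Sum>\<alpha>\<in>Poly_Mapping.keys p. Poly_Mapping.lookup p \<alpha> * (\<Prod>i\<in>UNIV. x i ^ Poly_Mapping.lookup \<alpha> i))"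

definition pconst :: "real \<Rightarrow> 'n rpoly" where
  "pconst c = Poly_Mapping.single 0 c"

definition mons :: "nat \<Rightarrow> ('n::finite \<Rightarrow>\<^sub>0 nat) set" where
  "mons d = {\<alpha>. mdeg \<alpha> \<le> d}"

definition kmin :: "'n rpoly \<Rightarrow> 'n rpoly list \<Rightarrow> 'n rpoly list \<Rightarrow> nat" where
  "kmin f g h = Max (set (map pceil (f # g @ h)))"

definition semialg :: "'n::finite rpoly list \<Rightarrow> ('n \<Rightarrow> real) set" where
  "semialg g = {x. \<forall>i<length g. 0 \<le> peval (g ! i) x}"

definition posdef :: "'a set \<Rightarrow> ('a \<Rightarrow> 'a \<Rightarrow> real) \<Rightarrow> bool" where
  "posdef A G \<longleftrightarrow> (\<forall>a\<in>A. \<forall>b\<in>A. G a b = G b a) \<and>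
     (\<forall>v. (\<exists>a\<in>A. v a \<noteq> 0) \<longrightarrow> 0 < (\<Sum>a\<in>A. \<Sum>b\<in>A. v a * G a b * v b))"

definition gram_poly :: "nat \<Rightarrow> (('n::finite \<Rightarrow>\<^sub>0 nat) \<Rightarrow> ('n \<Rightarrow>\<^sub>0 nat) \<Rightarrow> real) \<Rightarrow> 'n rpoly" where
  "gram_poly d G = (\<Sum>\<alpha>\<in>mons d. \<Sum>\<beta>\<in>mons d. Poly_Mapping.single (\<alpha> + \<beta>) (G \<alpha> \<beta>))"

definition qm_int :: "nat \<Rightarrow> 'n::finite rpoly list \<Rightarrow> 'n rpoly set" where
  "qm_int k g = {p. \<exists>G0 Gs. length Gs = length g \<and> posdef (mons k) G0 \<and>
      (\<forall>i<length g. posdef (mons (k - pceil (g ! i))) (Gs ! i)) \<and>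
      p = gram_poly k G0 + (\<Sum>i<length g. g ! i * gram_poly (k - pceil (g ! i)) (Gs ! i))}"

definition trunc_ideal :: "nat \<Rightarrow> 'n rpoly list \<Rightarrow> 'n rpoly set" where
  "trunc_ideal k h = {p. \<exists>\<psi>s. length \<psi>s = length h \<and>
      (\<forall>j<length h. pdeg (\<psi>s ! j) \<le> 2 * (k - pceil (h ! j))) \<and>
      p = (\<Sum>j<length h. \<psi>s ! j * h ! j)}"

definition QI :: "nat \<Rightarrow> 'n::finite rpoly list \<Rightarrow> 'n rpoly list \<Rightarrow> 'n rpoly set" where
  "QI k g h = {p + q | p q. p \<in> qm_int k g \<and> q \<in> trunc_ideal k h}"

definition mom_mat :: "(('n \<Rightarrow>\<^sub>0 nat) \<Rightarrow> real) \<Rightarrow> ('n \<Rightarrow>\<^sub>0 nat) \<Rightarrow> ('n \<Rightarrow>\<^sub>0 nat) \<Rightarrow> real" where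
  "mom_mat y \<alpha> \<beta> = y (\<alpha> + \<beta>)"

definition loc_mat :: "'n rpoly \<Rightarrow> (('n \<Rightarrow>\<^sub>0 nat) \<Rightarrow> real) \<Rightarrow> ('n \<Rightarrow>\<^sub>0 nat) \<Rightarrow> ('n \<Rightarrow>\<^sub>0 nat) \<Rightarrow> real" where
  "loc_mat q y \<alpha> \<beta> = (\<Sum>\<gamma>\<in>Poly_Mapping.keys q. Poly_Mapping.lookup q \<gamma> * y (\<alpha> + \<beta> + \<gamma>))"

definition trace_PXP :: "'a set \<Rightarrow> ('a \<Rightarrow> 'a \<Rightarrow> real) \<Rightarrow> ('a \<Rightarrow> 'a \<Rightarrow> real) \<Rightarrow> real" where
  "trace_PXP A P X = (\<Sum>a\<in>A. \<Sum>b\<in>A. \<Sum>c\<in>A. P a b * X b c * P c a)"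

text \<open>A positive definite element of S_k is a block-diagonal
  matrix diag(P0, Ps!0, ..., Ps!(m-1)) with positive definite blocks; the trace of
  P D_k(y) P is the sum of the blockwise traces. y ranges over all moment sequences
  (only the entries y_alpha with |alpha| <= 2k are ever used).\<close>
definition CTP :: "'n::finite rpoly \<Rightarrow> 'n rpoly list \<Rightarrow> 'n rpoly list \<Rightarrow> bool" where
  "CTP f g h \<longleftrightarrow> (\<forall>k\<ge>kmin f g h. \<exists>a>0. \<exists>P0 Ps. length Ps = length g \<and>
      posdef (mons k) P0 \<and> (\<forall>i<length g. posdef (mons (k - pceil (g ! i))) (Ps ! i)) \<and>
      (\<forall>y. (\<forall>j<length h. \<forall>\<alpha>\<in>mons (k - pceil (h ! j)). \<forall>\<beta>\<in>mons (k - pceil (h ! j)).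
               loc_mat (h ! j) y \<alpha> \<beta> = 0) \<and> y 0 = 1 \<longrightarrow>
           trace_PXP (mons k) P0 (mom_mat y) +
           (\<Sum>i<length g. trace_PXP (mons (k - pceil (g ! i))) (Ps ! i) (loc_mat (g ! i) y)) = a))"

end

theory Submission
  imports Defs
begin

text \<open>
  For a symmetric matrix \<open>P\<close> one has \<open>trace (P X P) = \<langle>P\<^sup>2, X\<rangle>\<close>. Hence for positive definite
  blocks \<open>P\<^sub>0, \<dots>, P\<^sub>m\<close> the trace of \<open>P D\<^sub>k(y) P\<close> is the Riesz functional \<open>L\<^sub>y\<close> applied to
  \<open>\<sigma> = v\<^sub>k\<^sup>T P\<^sub>0\<^sup>2 v\<^sub>k + \<Sum>\<^sub>i g\<^sub>i v\<^sup>T P\<^sub>i\<^sup>2 v \<in> Q\<^sub>k\<^sup>\<circ>(g)\<close>. If \<open>1 = \<sigma> + \<psi>\<close> with Gram matrices \<open>G\<^sub>i\<close> and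
  \<open>\<psi> \<in> I\<^sub>k(h)\<close>, choose \<open>P\<^sub>i\<close> with \<open>P\<^sub>i\<^sup>2 = G\<^sub>i\<close>: then the trace is \<open>L\<^sub>y(1) - L\<^sub>y(\<psi>) = 1\<close>, because the
  localizing constraints on \<open>y\<close> annihilate \<open>I\<^sub>k(h)\<close>. Conversely, if \<open>h = []\<close> and the trace is a
  constant \<open>a\<close>, then \<open>L\<^sub>y(\<sigma>) = a\<close> for every \<open>y\<close> with \<open>y\<^sub>0 = 1\<close>, which forces \<open>\<sigma> = a\<close>, so
  \<open>1 = \<sigma>/a \<in> Q\<^sub>k\<^sup>\<circ>(g)\<close>. Part 1 holds because \<open>Q\<^sub>k\<^sup>\<circ>(g)\<close> and \<open>I\<^sub>k(h)\<close> are closed under positive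
  scaling.

  The square roots come from a spectral theorem for symmetric matrices indexed by a finite set,
  proved variationally: the maximum of the quadratic form on the unit sphere of the orthogonal
  complement of the eigenvectors found so far is attained at a further eigenvector.
\<close>

definition dot_on :: "'a set \<Rightarrow> ('a \<Rightarrow> real) \<Rightarrow> ('a \<Rightarrow> real) \<Rightarrow> real" where
  "dot_on A x y = (\<Sum>a\<in>A. x a * y a)"

definition supported_on :: "'a set \<Rightarrow> ('a \<Rightarrow> real) \<Rightarrow> bool" where
  "supported_on A x \<longleftrightarrow> (\<forall>a. a \<notin> A \<longrightarrow> x a = 0)"

definition mat_vec :: "'a set \<Rightarrow> ('a \<Rightarrow> 'a \<Rightarrow> real) \<Rightarrow> ('a \<Rightarrow> real) \<Rightarrow> 'a \<Rightarrow> real" where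
  "mat_vec A S x a = (if a \<in> A then \<Sum>b\<in>A. S a b * x b else 0)"

definition symmetric_on :: "'a set \<Rightarrow> ('a \<Rightarrow> 'a \<Rightarrow> real) \<Rightarrow> bool" where
  "symmetric_on A S \<longleftrightarrow> (\<forall>a\<in>A. \<forall>b\<in>A. S a b = S b a)"

definition orthonormal_on :: "'a set \<Rightarrow> (nat \<Rightarrow> 'a \<Rightarrow> real) \<Rightarrow> nat \<Rightarrow> bool" where
  "orthonormal_on A u r \<longleftrightarrow> (\<forall>i<r. \<forall>j<r. dot_on A (u i) (u j) = (if i = j then 1 else 0))"

definition residual :: "'a set \<Rightarrow> (nat \<Rightarrow> 'a \<Rightarrow> real) \<Rightarrow> nat \<Rightarrow> ('a \<Rightarrow> real) \<Rightarrow> 'a \<Rightarrow> real" where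
  "residual A u r v c = v c - (\<Sum>i<r. dot_on A v (u i) * u i c)"

definition basis_vec :: "'a \<Rightarrow> 'a \<Rightarrow> real" where
  "basis_vec a c = (if c = a then 1 else 0)"

definition normalize_on :: "'a set \<Rightarrow> ('a \<Rightarrow> real) \<Rightarrow> 'a \<Rightarrow> real" where
  "normalize_on A w c = (if c \<in> A then w c / sqrt (dot_on A w w) else 0)"

lemma dot_on_commute: "dot_on A x y = dot_on A y x"
  unfolding dot_on_def by (simp add: mult.commute)

lemma dot_on_self_nonneg: "0 \<le> dot_on A x x"
  unfolding dot_on_def by (intro sum_nonneg) auto

lemma dot_on_self_eq_0D: "finite A \<Longrightarrow> dot_on A x x = 0 \<Longrightarrow> a \<in> A \<Longrightarrow> x a = 0"
  unfolding dot_on_def by (subst (asm) sum_nonneg_eq_0_iff) auto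

lemma dot_on_cong: "(\<And>a. a \<in> A \<Longrightarrow> y a = z a) \<Longrightarrow> dot_on A x y = dot_on A x z"
  unfolding dot_on_def by (intro sum.cong) auto

lemma dot_on_mult_right: "dot_on A x (\<lambda>c. t * y c) = t * dot_on A x y"
  unfolding dot_on_def by (simp add: sum_distrib_left mult.left_commute)

lemma dot_on_add_scaled_left: "dot_on A (\<lambda>c. x c + t * y c) w = dot_on A x w + t * dot_on A y w"
  unfolding dot_on_def by (simp add: distrib_right sum.distrib sum_distrib_left mult.assoc)

lemma dot_on_add_scaled_right: "dot_on A w (\<lambda>c. x c + t * y c) = dot_on A w x + t * dot_on A w y"
  by (metis dot_on_commute dot_on_add_scaled_left)

lemma dot_on_basis_vec: "finite A \<Longrightarrow> a \<in> A \<Longrightarrow> dot_on A (basis_vec a) z = z a"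
  unfolding dot_on_def basis_vec_def by (simp add: if_distrib[of "\<lambda>t. t * _"] cong: if_cong)

lemma dot_on_residual:
  "dot_on A (residual A u r v) w = dot_on A v w - (\<Sum>i<r. dot_on A v (u i) * dot_on A (u i) w)"
proof -
  have "dot_on A (residual A u r v) w
      = (\<Sum>a\<in>A. v a * w a - (\<Sum>i<r. dot_on A v (u i) * (u i a * w a)))"
    unfolding dot_on_def residual_def
    by (intro sum.cong refl) (simp add: left_diff_distrib sum_distrib_right mult.assoc)
  also have "\<dots> = dot_on A v w - (\<Sum>i<r. dot_on A v (u i) * dot_on A (u i) w)"
    unfolding dot_on_def sum_subtractf by (subst sum.swap) (simp add: sum_distrib_left)
  finally show ?thesis .
qed

lemma orthonormal_on_sum_dot:
  assumes "orthonormal_on A u r" "j < r"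
  shows "(\<Sum>i<r. c i * dot_on A (u i) (u j)) = c j"
proof -
  have "(\<Sum>i<r. c i * dot_on A (u i) (u j)) = (\<Sum>i<r. if i = j then c i else 0)"
    using assms unfolding orthonormal_on_def by (intro sum.cong) auto
  then show ?thesis using assms(2) by simp
qed

lemma dot_on_residual_orthogonal:
  "orthonormal_on A u r \<Longrightarrow> j < r \<Longrightarrow> dot_on A (residual A u r v) (u j) = 0"
  by (simp add: dot_on_residual orthonormal_on_sum_dot[of A u r j "\<lambda>i. dot_on A v (u i)"])

lemma dot_on_residual_self:
  assumes "orthonormal_on A u r"
  shows "dot_on A (residual A u r v) (residual A u r v) = dot_on A v v - (\<Sum>i<r. (dot_on A v (u i))\<^sup>2)"
proof -
  have "(\<Sum>i<r. dot_on A v (u i) * dot_on A (u i) (residual A u r v)) = 0"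
    using assms by (intro sum.neutral) (auto simp: dot_on_commute[of A "u _"] dot_on_residual_orthogonal)
  moreover have "dot_on A v (residual A u r v) = dot_on A v v - (\<Sum>i<r. (dot_on A v (u i))\<^sup>2)"
    by (subst dot_on_commute) (simp add: dot_on_residual dot_on_commute[of A "u _"] power2_eq_square)
  ultimately show ?thesis by (simp add: dot_on_residual)
qed

lemma dot_on_residual_basis_vec_self:
  assumes "finite A" "a \<in> A" "orthonormal_on A u r"
  shows "dot_on A (residual A u r (basis_vec a)) (residual A u r (basis_vec a)) = 1 - (\<Sum>i<r. (u i a)\<^sup>2)"
  using assms by (simp add: dot_on_residual_self dot_on_basis_vec) (simp add: basis_vec_def)

lemma orthonormal_on_sum_squares:
  assumes "finite A" "orthonormal_on A u r"
  shows "(\<Sum>a\<in>A. \<Sum>i<r. (u i a)\<^sup>2) = r"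
proof -
  have "(\<Sum>a\<in>A. \<Sum>i<r. (u i a)\<^sup>2) = (\<Sum>i<r. dot_on A (u i) (u i))"
    unfolding dot_on_def by (subst sum.swap) (simp add: power2_eq_square)
  also have "\<dots> = r" using assms(2) by (simp add: orthonormal_on_def)
  finally show ?thesis .
qed

lemma orthonormal_on_card_le:
  assumes "finite A" "orthonormal_on A u r"
  shows "r \<le> card A"
proof -
  have "real r = (\<Sum>a\<in>A. \<Sum>i<r. (u i a)\<^sup>2)"
    using orthonormal_on_sum_squares[OF assms] by simp
  also have "\<dots> \<le> (\<Sum>a\<in>A. 1)"
  proof (rule sum_mono)
    fix a assume "a \<in> A"
    from dot_on_residual_basis_vec_self[OF assms(1) this assms(2)]
      dot_on_self_nonneg[of A "residual A u r (basis_vec a)"]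
    show "(\<Sum>i<r. (u i a)\<^sup>2) \<le> 1" by linarith
  qed
  finally show ?thesis by simp
qed

lemma dot_on_normalize_on: "dot_on A (normalize_on A w) z = dot_on A w z / sqrt (dot_on A w w)"
  unfolding normalize_on_def dot_on_def by (simp add: sum_divide_distrib)

lemma dot_on_mat_vec: "dot_on A x (mat_vec A S y) = (\<Sum>a\<in>A. \<Sum>b\<in>A. x a * S a b * y b)"
  unfolding dot_on_def mat_vec_def by (simp add: sum_distrib_left mult.assoc)

lemma mat_vec_add_scaled: "mat_vec A S (\<lambda>c. x c + t * y c) = (\<lambda>a. mat_vec A S x a + t * mat_vec A S y a)"
  unfolding mat_vec_def by (auto simp: distrib_left sum.distrib sum_distrib_left mult.left_commute)

lemma dot_on_mat_vec_commute: "symmetric_on A S \<Longrightarrow> dot_on A x (mat_vec A S y) = dot_on A y (mat_vec A S x)"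
  unfolding dot_on_mat_vec symmetric_on_def
  by (subst sum.swap) (auto simp: mult_ac intro!: sum.cong)

lemma dot_on_normalize_on_mat_vec:
  "dot_on A (normalize_on A w) (mat_vec A S (normalize_on A w)) = dot_on A w (mat_vec A S w) / dot_on A w w"
proof -
  have "dot_on A (normalize_on A w) (mat_vec A S (normalize_on A w))
      = (\<Sum>a\<in>A. \<Sum>b\<in>A. (w a / sqrt (dot_on A w w)) * S a b * (w b / sqrt (dot_on A w w)))"
    unfolding dot_on_mat_vec normalize_on_def by (intro sum.cong) auto
  also have "\<dots> = dot_on A w (mat_vec A S w) / (sqrt (dot_on A w w))\<^sup>2"
    unfolding dot_on_mat_vec by (simp add: sum_divide_distrib power2_eq_square)
  finally show ?thesis using dot_on_self_nonneg[of A w] by simp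
qed

section \<open>A variational spectral theorem\<close>

text \<open>Vectors live in \<open>'a \<Rightarrow> real\<close>; requiring them to vanish outside \<open>A\<close> makes the sphere
  compact in the product topology.\<close>
definition orth_sphere :: "'a set \<Rightarrow> (nat \<Rightarrow> 'a \<Rightarrow> real) \<Rightarrow> nat \<Rightarrow> ('a \<Rightarrow> real) set" where
  "orth_sphere A u r = {x. supported_on A x \<and> dot_on A x x = 1 \<and> (\<forall>i<r. dot_on A x (u i) = 0)}"

lemma normalize_on_in_orth_sphere:
  assumes "0 < dot_on A w w" "\<forall>i<r. dot_on A w (u i) = 0"
  shows "normalize_on A w \<in> orth_sphere A u r"
proof -
  have "dot_on A (normalize_on A w) (normalize_on A w) = dot_on A w w / sqrt (dot_on A w w) / sqrt (dot_on A w w)"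
    by (simp add: dot_on_normalize_on dot_on_commute[of A w "normalize_on A w"])
  then have "dot_on A (normalize_on A w) (normalize_on A w) = 1"
    using assms(1) by simp
  moreover have "supported_on A (normalize_on A w)"
    by (simp add: supported_on_def normalize_on_def)
  moreover have "\<forall>i<r. dot_on A (normalize_on A w) (u i) = 0"
    using assms(2) by (simp add: dot_on_normalize_on)
  ultimately show ?thesis
    by (simp add: orth_sphere_def)
qed

text \<open>Some basis vector has a nonzero residual: otherwise the squared coordinates of the \<open>u\<^sub>i\<close>
  would sum to \<open>card A > r\<close>.\<close>
lemma orth_sphere_nonempty:
  assumes "finite A" "orthonormal_on A u r" "r < card A"
  shows "orth_sphere A u r \<noteq> {}"
proof -
  have "\<exists>a\<in>A. 0 < dot_on A (residual A u r (basis_vec a)) (residual A u r (basis_vec a))"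
  proof (rule ccontr)
    assume none: "\<not> ?thesis"
    have one: "(\<Sum>i<r. (u i a)\<^sup>2) = 1" if "a \<in> A" for a
    proof -
      have "\<not> 0 < dot_on A (residual A u r (basis_vec a)) (residual A u r (basis_vec a))"
        using none that by blast
      then show ?thesis
        using dot_on_residual_basis_vec_self[OF assms(1) that assms(2)]
          dot_on_self_nonneg[of A "residual A u r (basis_vec a)"] by linarith
    qed
    have "(\<Sum>a\<in>A. \<Sum>i<r. (u i a)\<^sup>2) = (\<Sum>a\<in>A. 1)"
      using one by (rule sum.cong[OF refl])
    then have "real r = card A"
      using orthonormal_on_sum_squares[OF assms(1,2)] by (simp only: sum_constant)
    then have "r = card A" by (rule of_nat_eq_iff[THEN iffD1])
    with assms(3) show False by simp
  qed
  then obtain a where "0 < dot_on A (residual A u r (basis_vec a)) (residual A u r (basis_vec a))"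
    by blast
  then have "normalize_on A (residual A u r (basis_vec a)) \<in> orth_sphere A u r"
    using dot_on_residual_orthogonal[OF assms(2)] by (intro normalize_on_in_orth_sphere) auto
  then show ?thesis by auto
qed

lemma closed_orth_sphere: "closed (orth_sphere A u r)"
proof -
  have "orth_sphere A u r = {x. (\<forall>a. a \<notin> A \<longrightarrow> x a = 0) \<and> (\<Sum>a\<in>A. x a * x a) = 1 \<and>
      (\<forall>i. i < r \<longrightarrow> (\<Sum>a\<in>A. x a * u i a) = 0)}"
    unfolding orth_sphere_def supported_on_def dot_on_def by auto
  moreover have "closed {x::'a \<Rightarrow> real. a \<notin> A \<longrightarrow> x a = 0}" for a
    by (cases "a \<in> A") (auto intro!: closed_Collect_eq continuous_intros)
  moreover have "closed {x::'a \<Rightarrow> real. i < r \<longrightarrow> (\<Sum>a\<in>A. x a * u i a) = 0}" for i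
    by (cases "i < r") (auto intro!: closed_Collect_eq continuous_intros)
  moreover have "closed {x::'a \<Rightarrow> real. (\<Sum>a\<in>A. x a * x a) = 1}"
    by (auto intro!: closed_Collect_eq continuous_intros)
  ultimately show ?thesis
    by (simp only: closed_Collect_conj closed_Collect_all)
qed

lemma orth_sphere_subset_box:
  assumes "finite A"
  shows "orth_sphere A u r \<subseteq> Pi UNIV (\<lambda>a. if a \<in> A then {-1..1} else {0})"
proof (intro subsetI Pi_I)
  fix x a assume x: "x \<in> orth_sphere A u r"
  show "x a \<in> (if a \<in> A then {-1..1} else {0})"
  proof (cases "a \<in> A")
    case True
    have "(x a)\<^sup>2 \<le> (\<Sum>b\<in>A. (x b)\<^sup>2)"
      using assms True by (intro member_le_sum) auto
    also have "\<dots> = 1"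
      using x unfolding orth_sphere_def dot_on_def by (simp add: power2_eq_square)
    finally show ?thesis using True by (simp add: abs_square_le_1 abs_le_iff)
  next
    case False
    then show ?thesis using x unfolding orth_sphere_def supported_on_def by auto
  qed
qed

lemma compact_orth_sphere:
  assumes "finite A"
  shows "compact (orth_sphere A u r)"
proof -
  have "compactin (product_topology (\<lambda>_. euclidean) UNIV)
      (PiE UNIV (\<lambda>a. if a \<in> A then {-1..1::real} else {0}))"
    by (subst compactin_PiE) auto
  then have "compact (Pi UNIV (\<lambda>a. if a \<in> A then {-1..1::real} else {0}))"
    by (simp add: euclidean_product_topology PiE_UNIV_domain)
  from compact_Int_closed[OF this closed_orth_sphere[of A u r]]
  show ?thesis using orth_sphere_subset_box[OF assms, of u r] by (metis Int_absorb1)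
qed

lemma quadratic_form_attains_max:
  assumes "finite A" "orth_sphere A u r \<noteq> {}"
  shows "\<exists>x\<in>orth_sphere A u r. \<forall>z\<in>orth_sphere A u r.
           dot_on A z (mat_vec A S z) \<le> dot_on A x (mat_vec A S x)"
proof -
  have coord: "continuous_on K (\<lambda>x::'a \<Rightarrow> real. x a)" for K a
    by (rule continuous_on_subset[OF continuous_on_product_coordinates]) simp
  have "continuous_on (orth_sphere A u r) (\<lambda>z. dot_on A z (mat_vec A S z))"
    unfolding dot_on_mat_vec by (intro continuous_intros coord)
  from continuous_attains_sup[OF compact_orth_sphere[OF assms(1)] assms(2) this]
  show ?thesis .
qed

lemma linear_coeff_eq_0_if_nonneg:
  fixes a b :: real
  assumes "\<forall>t. 0 \<le> b * t + a * t\<^sup>2"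
  shows "b = 0"
proof (rule ccontr)
  assume b: "b \<noteq> 0"
  define c where "c = \<bar>a\<bar> + 1"
  have c: "c > 0" "a < c" unfolding c_def by auto
  have "0 \<le> b * (- b / c) + a * (- b / c)\<^sup>2" using assms by blast
  then have "0 \<le> (b * (- b / c) + a * (- b / c)\<^sup>2) * c\<^sup>2" by simp
  also have "\<dots> = b\<^sup>2 * (a - c)" using c by (simp add: field_simps power2_eq_square)
  also have "\<dots> < 0" using b c by (simp add: mult_pos_neg)
  finally show False by simp
qed

context
  fixes A :: "'a set" and S :: "'a \<Rightarrow> 'a \<Rightarrow> real" and u :: "nat \<Rightarrow> 'a \<Rightarrow> real" and r x
  assumes finite: "finite A"
    and x_max: "x \<in> orth_sphere A u r"
      "\<forall>z\<in>orth_sphere A u r. dot_on A z (mat_vec A S z) \<le> dot_on A x (mat_vec A S x)"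
begin

lemma quadratic_form_le_max:
  assumes "\<forall>i<r. dot_on A z (u i) = 0"
  shows "dot_on A z (mat_vec A S z) \<le> dot_on A x (mat_vec A S x) * dot_on A z z"
proof (cases "dot_on A z z = 0")
  case True
  then have "\<forall>a\<in>A. z a = 0" using dot_on_self_eq_0D[OF finite] by blast
  then have "dot_on A z (mat_vec A S z) = 0" by (simp add: dot_on_mat_vec)
  then show ?thesis using True by simp
next
  case False
  then have pos: "0 < dot_on A z z" using dot_on_self_nonneg[of A z] by simp
  have "dot_on A z (mat_vec A S z) / dot_on A z z \<le> dot_on A x (mat_vec A S x)"
    using x_max(2) normalize_on_in_orth_sphere[OF pos assms]
    by (simp flip: dot_on_normalize_on_mat_vec)
  then show ?thesis using pos by (simp add: divide_le_eq)
qed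

text \<open>Lagrange multipliers: perturb \<open>x\<close> to \<open>x + t y\<close> and use that a nonnegative quadratic
  in \<open>t\<close> without constant term has no linear term.\<close>
lemma max_quadratic_form_stationary:
  assumes S: "symmetric_on A S" and y: "\<forall>i<r. dot_on A y (u i) = 0"
  shows "dot_on A y (mat_vec A S x) = dot_on A x (mat_vec A S x) * dot_on A y x"
proof -
  define l where "l = dot_on A x (mat_vec A S x)"
  have x1: "dot_on A x x = 1" and xo: "\<forall>i<r. dot_on A x (u i) = 0"
    using x_max(1) unfolding orth_sphere_def by auto
  have "0 \<le> (2 * l * dot_on A x y - 2 * dot_on A y (mat_vec A S x)) * t
          + (l * dot_on A y y - dot_on A y (mat_vec A S y)) * t\<^sup>2" for t
  proof -
    have "\<forall>i<r. dot_on A (\<lambda>c. x c + t * y c) (u i) = 0"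
      using xo y by (simp add: dot_on_add_scaled_left)
    from quadratic_form_le_max[OF this]
    show ?thesis
      unfolding mat_vec_add_scaled dot_on_add_scaled_left dot_on_add_scaled_right l_def[symmetric]
      using dot_on_mat_vec_commute[OF S, of x y] dot_on_commute[of A x y] x1
      by (simp add: algebra_simps power2_eq_square)
  qed
  from linear_coeff_eq_0_if_nonneg[OF allI[OF this]] show ?thesis
    unfolding l_def using dot_on_commute[of A x y] by simp
qed

lemma max_quadratic_form_eigenvector:
  assumes S: "symmetric_on A S" and u: "orthonormal_on A u r"
    and eigen: "\<forall>i<r. \<forall>a\<in>A. mat_vec A S (u i) a = lam i * u i a"
    and a: "a \<in> A"
  shows "mat_vec A S x a = dot_on A x (mat_vec A S x) * x a"
proof -
  define y where "y = residual A u r (basis_vec a)"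
  have xo: "\<forall>i<r. dot_on A x (u i) = 0" using x_max(1) unfolding orth_sphere_def by auto
  have Sx_orth: "dot_on A (u i) (mat_vec A S x) = 0" if "i < r" for i
  proof -
    have "dot_on A (u i) (mat_vec A S x) = dot_on A x (mat_vec A S (u i))"
      by (rule dot_on_mat_vec_commute[OF S])
    also have "\<dots> = lam i * dot_on A x (u i)"
      using eigen that by (simp add: dot_on_cong[of A "mat_vec A S (u i)"] dot_on_mult_right)
    finally show ?thesis using xo that by simp
  qed
  have "\<forall>i<r. dot_on A y (u i) = 0"
    unfolding y_def using dot_on_residual_orthogonal[OF u] by auto
  from max_quadratic_form_stationary[OF S this] show ?thesis
    unfolding y_def dot_on_residual using Sx_orth xo dot_on_basis_vec[OF finite a]
    by (simp add: dot_on_commute[of A "u _" x])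
qed

end

lemma orthonormal_on_extend:
  assumes "orthonormal_on A u r" "x \<in> orth_sphere A u r"
  shows "orthonormal_on A (u(r := x)) (Suc r)"
  unfolding orthonormal_on_def
proof (intro allI impI)
  fix i j assume "i < Suc r" "j < Suc r"
  then show "dot_on A ((u(r := x)) i) ((u(r := x)) j) = (if i = j then 1 else 0)"
    using assms dot_on_commute[of A x "u i"] unfolding orthonormal_on_def orth_sphere_def
    by (cases "i = r"; cases "j = r") (auto simp: less_Suc_eq)
qed

lemma orthonormal_eigenvectors_exist:
  assumes A: "finite A" and S: "symmetric_on A S" and "r \<le> card A"
  shows "\<exists>u lam. orthonormal_on A u r \<and> (\<forall>i<r. \<forall>a\<in>A. mat_vec A S (u i) a = lam i * u i a)"
  using assms(3)
proof (induction r)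
  case 0
  then show ?case by (auto simp: orthonormal_on_def)
next
  case (Suc r)
  then obtain u lam where u: "orthonormal_on A u r"
    and eigen: "\<forall>i<r. \<forall>a\<in>A. mat_vec A S (u i) a = lam i * u i a"
    by auto
  from orth_sphere_nonempty[OF A u] Suc.prems obtain x where
    x: "x \<in> orth_sphere A u r"
    and x_max: "\<forall>z\<in>orth_sphere A u r. dot_on A z (mat_vec A S z) \<le> dot_on A x (mat_vec A S x)"
    using quadratic_form_attains_max[OF A] by (metis Suc_le_eq)
  have "\<forall>i<Suc r. \<forall>a\<in>A. mat_vec A S ((u(r := x)) i) a = (lam(r := dot_on A x (mat_vec A S x))) i * (u(r := x)) i a"
    using eigen max_quadratic_form_eigenvector[OF A x x_max S u eigen] by (auto simp: less_Suc_eq)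
  then show ?case using orthonormal_on_extend[OF u x] by blast
qed

lemma orthonormal_on_card_complete:
  assumes A: "finite A" and u: "orthonormal_on A u (card A)" and a: "a \<in> A" and c: "c \<in> A"
  shows "(\<Sum>i<card A. u i a * u i c) = basis_vec a c"
proof -
  define w where "w = residual A u (card A) (basis_vec a)"
  have "dot_on A w w = 0"
  proof (rule ccontr)
    assume "dot_on A w w \<noteq> 0"
    then have "0 < dot_on A w w" using dot_on_self_nonneg[of A w] by simp
    then have "normalize_on A w \<in> orth_sphere A u (card A)"
      unfolding w_def using dot_on_residual_orthogonal[OF u]
      by (intro normalize_on_in_orth_sphere) auto
    from orthonormal_on_card_le[OF A orthonormal_on_extend[OF u this]] show False by simp
  qed
  then have "w c = 0" using dot_on_self_eq_0D[OF A _ c] by blast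
  then show ?thesis
    unfolding w_def residual_def using dot_on_basis_vec[OF A a] by (simp add: basis_vec_def)
qed

lemma orthonormal_on_nonzero:
  assumes "orthonormal_on A u r" "i < r"
  shows "\<exists>a\<in>A. u i a \<noteq> 0"
proof -
  have "dot_on A (u i) (u i) = 1" using assms unfolding orthonormal_on_def by simp
  then show ?thesis
    unfolding dot_on_def by (metis (no_types, lifting) mult_zero_left sum.neutral zero_neq_one)
qed

lemma orthonormal_on_expansion:
  assumes "finite A" "orthonormal_on A u (card A)" "a \<in> A"
  shows "v a = (\<Sum>i<card A. u i a * dot_on A v (u i))"
proof -
  have "v a = (\<Sum>c\<in>A. v c * basis_vec a c)"
    using assms by (simp add: basis_vec_def if_distrib[of "\<lambda>t. _ * t"] cong: if_cong)
  also have "\<dots> = (\<Sum>c\<in>A. v c * (\<Sum>i<card A. u i a * u i c))"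
    using orthonormal_on_card_complete[OF assms] by simp
  also have "\<dots> = (\<Sum>i<card A. u i a * dot_on A v (u i))"
    unfolding dot_on_def by (simp add: sum_distrib_left mult_ac sum.swap[of _ A])
  finally show ?thesis .
qed

definition spectral_mat :: "(nat \<Rightarrow> 'a \<Rightarrow> real) \<Rightarrow> (nat \<Rightarrow> real) \<Rightarrow> nat \<Rightarrow> 'a \<Rightarrow> 'a \<Rightarrow> real" where
  "spectral_mat u s n a c = (\<Sum>i<n. s i * u i a * u i c)"

lemma spectral_decomposition:
  assumes A: "finite A" and S: "symmetric_on A S"
  obtains u lam where "orthonormal_on A u (card A)"
    "\<And>a c. a \<in> A \<Longrightarrow> c \<in> A \<Longrightarrow> S a c = spectral_mat u lam (card A) a c"
proof -
  obtain u lam where u: "orthonormal_on A u (card A)"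
    and eigen: "\<forall>i<card A. \<forall>a\<in>A. mat_vec A S (u i) a = lam i * u i a"
    using orthonormal_eigenvectors_exist[OF A S order.refl] by blast
  have "S a c = spectral_mat u lam (card A) a c" if a: "a \<in> A" and c: "c \<in> A" for a c
  proof -
    have "S a c = (\<Sum>i<card A. u i c * dot_on A (S a) (u i))"
      by (rule orthonormal_on_expansion[OF A u c])
    also have "\<dots> = spectral_mat u lam (card A) a c"
      unfolding spectral_mat_def using eigen a
      by (intro sum.cong refl) (auto simp: mat_vec_def dot_on_def mult_ac)
    finally show ?thesis .
  qed
  with that u show ?thesis by blast
qed

section \<open>Square roots of positive definite matrices\<close>

definition mat_sq :: "'a set \<Rightarrow> ('a \<Rightarrow> 'a \<Rightarrow> real) \<Rightarrow> 'a \<Rightarrow> 'a \<Rightarrow> real" where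
  "mat_sq A P a c = (\<Sum>b\<in>A. P a b * P b c)"

lemma quadratic_form_spectral_mat:
  "(\<Sum>a\<in>A. \<Sum>b\<in>A. v a * spectral_mat u s n a b * v b) = (\<Sum>i<n. s i * (dot_on A v (u i))\<^sup>2)"
proof -
  have "(\<Sum>a\<in>A. \<Sum>b\<in>A. v a * spectral_mat u s n a b * v b)
      = (\<Sum>i<n. \<Sum>a\<in>A. \<Sum>b\<in>A. s i * (v a * u i a) * (v b * u i b))"
    unfolding spectral_mat_def
    by (simp add: sum_distrib_left sum_distrib_right mult_ac sum.swap[of _ "{..<n}"])
  also have "\<dots> = (\<Sum>i<n. s i * (dot_on A v (u i))\<^sup>2)"
    unfolding dot_on_def power2_eq_square by (simp add: sum_distrib_left sum_distrib_right mult_ac)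
  finally show ?thesis .
qed

lemma mat_sq_spectral_mat:
  assumes "orthonormal_on A u n"
  shows "mat_sq A (spectral_mat u s n) a c = spectral_mat u (\<lambda>i. s i * s i) n a c"
proof -
  have "mat_sq A (spectral_mat u s n) a c
      = (\<Sum>i<n. \<Sum>j<n. (s j * u j c * (s i * u i a)) * dot_on A (u j) (u i))"
    unfolding mat_sq_def spectral_mat_def dot_on_def sum_product
    by (simp add: sum_distrib_left mult_ac sum.swap[of _ A])
  also have "\<dots> = (\<Sum>i<n. s i * u i c * (s i * u i a))"
    by (intro sum.cong refl orthonormal_on_sum_dot[OF assms]) simp
  finally show ?thesis unfolding spectral_mat_def by (simp add: mult_ac)
qed

lemma posdef_symmetric_on: "posdef A G \<Longrightarrow> symmetric_on A G"
  unfolding posdef_def symmetric_on_def by auto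

lemma quadratic_form_spectral_mat_eigenvector:
  assumes "orthonormal_on A u n" "i < n"
  shows "(\<Sum>a\<in>A. \<Sum>b\<in>A. u i a * spectral_mat u s n a b * u i b) = s i"
proof -
  have "(\<Sum>j<n. s j * (dot_on A (u i) (u j))\<^sup>2) = (\<Sum>j<n. if j = i then s j else 0)"
    using assms unfolding orthonormal_on_def by (intro sum.cong) auto
  then show ?thesis using assms(2) by (simp add: quadratic_form_spectral_mat)
qed

lemma posdef_spectral_mat:
  assumes A: "finite A" and u: "orthonormal_on A u (card A)" and s: "\<And>i. i < card A \<Longrightarrow> 0 < s i"
  shows "posdef A (spectral_mat u s (card A))"
  unfolding posdef_def quadratic_form_spectral_mat
proof (intro conjI ballI allI impI)
  show "spectral_mat u s (card A) a b = spectral_mat u s (card A) b a" for a b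
    unfolding spectral_mat_def by (simp add: mult_ac)
  fix v :: "'a \<Rightarrow> real" assume "\<exists>a\<in>A. v a \<noteq> 0"
  then obtain a where a: "a \<in> A" "(\<Sum>i<card A. u i a * dot_on A v (u i)) \<noteq> 0"
    using orthonormal_on_expansion[OF A u] by metis
  then obtain i where i: "i < card A" "dot_on A v (u i) \<noteq> 0"
    by (auto elim: sum.not_neutral_contains_not_neutral)
  have "0 \<le> s j * (dot_on A v (u j))\<^sup>2" if "j < card A" for j
    using s[OF that] by simp
  moreover have "0 < s i * (dot_on A v (u i))\<^sup>2"
    using s[OF i(1)] i(2) by simp
  ultimately show "0 < (\<Sum>j<card A. s j * (dot_on A v (u j))\<^sup>2)"
    using i(1) by (intro sum_pos2[of _ i]) auto
qed

lemma posdef_sqrt: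
  assumes A: "finite A" and G: "posdef A G"
  obtains P where "posdef A P" "\<And>a c. a \<in> A \<Longrightarrow> c \<in> A \<Longrightarrow> mat_sq A P a c = G a c"
proof -
  obtain u lam where u: "orthonormal_on A u (card A)"
    and G_eq: "\<And>a c. a \<in> A \<Longrightarrow> c \<in> A \<Longrightarrow> G a c = spectral_mat u lam (card A) a c"
    using spectral_decomposition[OF A posdef_symmetric_on[OF G]] by metis
  have lam_pos: "0 < lam i" if i: "i < card A" for i
  proof -
    have "0 < (\<Sum>a\<in>A. \<Sum>b\<in>A. u i a * G a b * u i b)"
      using G orthonormal_on_nonzero[OF u i] unfolding posdef_def by blast
    also have "\<dots> = lam i"
      using quadratic_form_spectral_mat_eigenvector[OF u i] G_eq by (simp cong: sum.cong)
    finally show ?thesis .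
  qed
  define P where "P = spectral_mat u (\<lambda>i. sqrt (lam i)) (card A)"
  have "posdef A P"
    unfolding P_def using lam_pos by (intro posdef_spectral_mat[OF A u]) simp
  moreover have "mat_sq A P a c = G a c" if "a \<in> A" "c \<in> A" for a c
    unfolding P_def mat_sq_spectral_mat[OF u] G_eq[OF that]
    unfolding spectral_mat_def by (intro sum.cong refl) (simp add: lam_pos less_imp_le)
  ultimately show ?thesis using that by blast
qed

definition mat_sqrt :: "'a set \<Rightarrow> ('a \<Rightarrow> 'a \<Rightarrow> real) \<Rightarrow> 'a \<Rightarrow> 'a \<Rightarrow> real" where
  "mat_sqrt A G = (SOME P. posdef A P \<and> (\<forall>a\<in>A. \<forall>c\<in>A. mat_sq A P a c = G a c))"

lemma
  assumes "finite A" "posdef A G"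
  shows posdef_mat_sqrt: "posdef A (mat_sqrt A G)"
    and mat_sq_mat_sqrt: "a \<in> A \<Longrightarrow> c \<in> A \<Longrightarrow> mat_sq A (mat_sqrt A G) a c = G a c"
proof -
  obtain P where "posdef A P" "\<And>a c. a \<in> A \<Longrightarrow> c \<in> A \<Longrightarrow> mat_sq A P a c = G a c"
    using posdef_sqrt[OF assms] by blast
  then have "\<exists>P. posdef A P \<and> (\<forall>a\<in>A. \<forall>c\<in>A. mat_sq A P a c = G a c)" by blast
  from someI_ex[OF this] show "posdef A (mat_sqrt A G)"
    and "a \<in> A \<Longrightarrow> c \<in> A \<Longrightarrow> mat_sq A (mat_sqrt A G) a c = G a c"
    unfolding mat_sqrt_def by blast+
qed

lemma posdef_scale:
  assumes "posdef A G" "0 < c"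
  shows "posdef A (\<lambda>a b. c * G a b)"
proof -
  have "(\<Sum>a\<in>A. \<Sum>b\<in>A. v a * (c * G a b) * v b) = c * (\<Sum>a\<in>A. \<Sum>b\<in>A. v a * G a b * v b)" for v
    by (simp add: sum_distrib_left mult_ac)
  then show ?thesis using assms unfolding posdef_def by auto
qed

text \<open>\<open>v\<^sup>T P\<^sup>2 v = |P v|\<^sup>2\<close>, and \<open>P v \<noteq> 0\<close> because \<open>v\<^sup>T P v > 0\<close>.\<close>
lemma posdef_mat_sq:
  assumes A: "finite A" and P: "posdef A P"
  shows "posdef A (mat_sq A P)"
  unfolding posdef_def
proof (intro conjI ballI allI impI)
  have S: "symmetric_on A P" using posdef_symmetric_on[OF P] .
  show "mat_sq A P a b = mat_sq A P b a" if "a \<in> A" "b \<in> A" for a b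
    using S that unfolding mat_sq_def symmetric_on_def by (auto simp: mult.commute intro: sum.cong)
  fix v :: "'a \<Rightarrow> real" assume v: "\<exists>a\<in>A. v a \<noteq> 0"
  define w where "w = mat_vec A P v"
  have "0 < dot_on A v w"
    using P v unfolding posdef_def w_def dot_on_mat_vec by blast
  then have "(\<Sum>a\<in>A. v a * w a) \<noteq> 0" unfolding dot_on_def by simp
  then obtain c where "c \<in> A" "v c * w c \<noteq> 0" by (rule sum.not_neutral_contains_not_neutral)
  then have "0 < dot_on A w w"
    using A unfolding dot_on_def by (intro sum_pos2[of A c]) (auto simp: zero_less_mult_iff)
  also have "dot_on A w w = dot_on A v (mat_vec A P w)"
    unfolding w_def by (rule dot_on_mat_vec_commute[OF S])
  also have "\<dots> = (\<Sum>a\<in>A. \<Sum>b\<in>A. \<Sum>c\<in>A. v a * P a b * P b c * v c)"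
    unfolding dot_on_mat_vec w_def mat_vec_def by (intro sum.cong refl) (simp add: sum_distrib_left mult_ac)
  also have "\<dots> = (\<Sum>a\<in>A. \<Sum>c\<in>A. \<Sum>b\<in>A. v a * P a b * P b c * v c)"
    by (rule sum.cong[OF refl], rule sum.swap)
  also have "\<dots> = (\<Sum>a\<in>A. \<Sum>b\<in>A. v a * mat_sq A P a b * v b)"
    unfolding mat_sq_def by (simp add: sum_distrib_left sum_distrib_right mult_ac)
  finally show "0 < (\<Sum>a\<in>A. \<Sum>b\<in>A. v a * mat_sq A P a b * v b)" .
qed

lemma trace_PXP_eq:
  assumes "symmetric_on A P"
  shows "trace_PXP A P X = (\<Sum>b\<in>A. \<Sum>c\<in>A. mat_sq A P b c * X b c)"
proof -
  have "trace_PXP A P X = (\<Sum>b\<in>A. \<Sum>c\<in>A. \<Sum>a\<in>A. P a b * X b c * P c a)"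
    unfolding trace_PXP_def by (subst sum.swap) (rule sum.cong[OF refl], rule sum.swap)
  also have "\<dots> = (\<Sum>b\<in>A. \<Sum>c\<in>A. \<Sum>a\<in>A. P b a * P a c * X b c)"
    using assms unfolding symmetric_on_def by (intro sum.cong refl) (simp add: mult_ac)
  finally show ?thesis by (simp add: mat_sq_def sum_distrib_right)
qed

section \<open>The Riesz functional\<close>

definition riesz :: "(('n \<Rightarrow>\<^sub>0 nat) \<Rightarrow> real) \<Rightarrow> 'n rpoly \<Rightarrow> real" where
  "riesz y p = (\<Sum>\<gamma>\<in>Poly_Mapping.keys p. Poly_Mapping.lookup p \<gamma> * y \<gamma>)"

lemma riesz_eq_sum_superset:
  "finite F \<Longrightarrow> Poly_Mapping.keys p \<subseteq> F \<Longrightarrow> riesz y p = (\<Sum>\<gamma>\<in>F. Poly_Mapping.lookup p \<gamma> * y \<gamma>)"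
  unfolding riesz_def by (rule sum.mono_neutral_left) (auto simp: in_keys_iff)

lemma riesz_0: "riesz y 0 = 0"
  unfolding riesz_def by simp

lemma riesz_add: "riesz y (p + q) = riesz y p + riesz y q"
proof -
  let ?F = "Poly_Mapping.keys p \<union> Poly_Mapping.keys q"
  have "riesz y (p + q) = (\<Sum>\<gamma>\<in>?F. Poly_Mapping.lookup (p + q) \<gamma> * y \<gamma>)"
    using keys_add[of p q] by (intro riesz_eq_sum_superset) auto
  also have "\<dots> = (\<Sum>\<gamma>\<in>?F. Poly_Mapping.lookup p \<gamma> * y \<gamma>) + (\<Sum>\<gamma>\<in>?F. Poly_Mapping.lookup q \<gamma> * y \<gamma>)"
    by (simp add: lookup_add distrib_right sum.distrib)
  also have "\<dots> = riesz y p + riesz y q"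
    by (subst (1 2) riesz_eq_sum_superset[of ?F]) auto
  finally show ?thesis .
qed

lemma riesz_sum: "riesz y (\<Sum>i\<in>I. f i) = (\<Sum>i\<in>I. riesz y (f i))"
  by (induction I rule: infinite_finite_induct) (auto simp: riesz_add riesz_0)

lemma riesz_single: "riesz y (Poly_Mapping.single \<gamma> c) = c * y \<gamma>"
  unfolding riesz_def by auto

lemma riesz_pconst: "riesz y (pconst c) = c * y 0"
  unfolding pconst_def by (rule riesz_single)

lemma riesz_delta: "riesz (\<lambda>\<delta>. if \<delta> = \<gamma> then 1 else 0) p = Poly_Mapping.lookup p \<gamma>"
proof -
  have "riesz (\<lambda>\<delta>. if \<delta> = \<gamma> then 1 else 0) p
      = (\<Sum>\<delta>\<in>insert \<gamma> (Poly_Mapping.keys p). Poly_Mapping.lookup p \<delta> * (if \<delta> = \<gamma> then 1 else 0))"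
    by (intro riesz_eq_sum_superset) auto
  also have "\<dots> = (\<Sum>\<delta>\<in>insert \<gamma> (Poly_Mapping.keys p). if \<delta> = \<gamma> then Poly_Mapping.lookup p \<delta> else 0)"
    by (intro sum.cong) auto
  finally show ?thesis by simp
qed

lemma riesz_add_moments: "riesz (\<lambda>\<delta>. y \<delta> + z \<delta>) p = riesz y p + riesz z p"
  unfolding riesz_def by (simp add: distrib_left sum.distrib)

text \<open>Moment vectors with \<open>y\<^sub>0 = 1\<close> separate polynomials: test with \<open>y = e\<^sub>0\<close> and \<open>y = e\<^sub>0 + e\<^sub>\<gamma>\<close>.\<close>
lemma eq_pconst_if_riesz_const:
  assumes "\<forall>y. y 0 = 1 \<longrightarrow> riesz y p = c"
  shows "p = pconst c"
proof (rule poly_mapping_eqI)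
  fix \<gamma>
  have p0: "Poly_Mapping.lookup p 0 = c"
    using assms riesz_delta[of 0 p] by simp
  show "Poly_Mapping.lookup p \<gamma> = Poly_Mapping.lookup (pconst c) \<gamma>"
  proof (cases "\<gamma> = 0")
    case True
    then show ?thesis using p0 by (simp add: pconst_def)
  next
    case False
    then have "riesz (\<lambda>\<delta>. (if \<delta> = 0 then 1 else 0) + (if \<delta> = \<gamma> then 1 else 0)) p = c"
      using assms by simp
    then have "Poly_Mapping.lookup p \<gamma> = 0"
      using p0 by (simp add: riesz_add_moments riesz_delta)
    then show ?thesis using False by (simp add: pconst_def lookup_single)
  qed
qed

lemma sum_single_lookup:
  "(\<Sum>\<delta>\<in>Poly_Mapping.keys p. Poly_Mapping.single \<delta> (Poly_Mapping.lookup p \<delta>)) = p"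
  by (rule poly_mapping_eqI) (simp add: lookup_sum lookup_single when_def in_keys_iff)

lemma riesz_mult_single:
  "riesz y (q * Poly_Mapping.single \<gamma> c) = c * (\<Sum>\<delta>\<in>Poly_Mapping.keys q. Poly_Mapping.lookup q \<delta> * y (\<gamma> + \<delta>))"
proof -
  have "q * Poly_Mapping.single \<gamma> c
      = (\<Sum>\<delta>\<in>Poly_Mapping.keys q. Poly_Mapping.single (\<delta> + \<gamma>) (Poly_Mapping.lookup q \<delta> * c))"
    by (subst (1) sum_single_lookup[symmetric]) (simp add: sum_distrib_right mult_single)
  then show ?thesis
    by (simp add: riesz_sum riesz_single sum_distrib_left mult_ac add.commute)
qed

lemma riesz_gram_poly: "riesz y (gram_poly d G) = (\<Sum>\<alpha>\<in>mons d. \<Sum>\<beta>\<in>mons d. G \<alpha> \<beta> * mom_mat y \<alpha> \<beta>)"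
  unfolding gram_poly_def by (simp add: riesz_sum riesz_single mom_mat_def)

lemma riesz_mult_gram_poly:
  "riesz y (q * gram_poly d G) = (\<Sum>\<alpha>\<in>mons d. \<Sum>\<beta>\<in>mons d. G \<alpha> \<beta> * loc_mat q y \<alpha> \<beta>)"
  unfolding gram_poly_def
  by (simp add: sum_distrib_left riesz_sum riesz_mult_single loc_mat_def add.commute)

lemma mdeg_eq_sum_UNIV: "mdeg (\<alpha> :: 'n::finite \<Rightarrow>\<^sub>0 nat) = (\<Sum>i\<in>UNIV. Poly_Mapping.lookup \<alpha> i)"
  unfolding mdeg_def by (rule sum.mono_neutral_left) (auto simp: in_keys_iff)

lemma mdeg_add: "mdeg ((\<alpha> :: 'n::finite \<Rightarrow>\<^sub>0 nat) + \<beta>) = mdeg \<alpha> + mdeg \<beta>"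
  by (simp add: mdeg_eq_sum_UNIV lookup_add sum.distrib)

lemma mdeg_single_1: "mdeg (Poly_Mapping.single (i::'n::finite) (1::nat)) = 1"
  by (simp add: mdeg_eq_sum_UNIV lookup_single when_def)

lemma lookup_le_mdeg: "Poly_Mapping.lookup (\<alpha> :: 'n::finite \<Rightarrow>\<^sub>0 nat) i \<le> mdeg \<alpha>"
  unfolding mdeg_eq_sum_UNIV by (rule member_le_sum) auto

lemma mdeg_le_add_split:
  "mdeg (\<gamma> :: 'n::finite \<Rightarrow>\<^sub>0 nat) \<le> a + b \<Longrightarrow> \<exists>\<alpha> \<beta>. \<gamma> = \<alpha> + \<beta> \<and> mdeg \<alpha> \<le> a \<and> mdeg \<beta> \<le> b"
proof (induction a arbitrary: \<gamma>)
  case 0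
  then show ?case by (intro exI[of _ 0] exI[of _ \<gamma>]) (simp add: mdeg_def)
next
  case (Suc a)
  show ?case
  proof (cases "mdeg \<gamma> \<le> a + b")
    case True
    with Suc.IH show ?thesis by (meson le_Suc_eq)
  next
    case False
    then obtain i where i: "0 < Poly_Mapping.lookup \<gamma> i"
      unfolding mdeg_eq_sum_UNIV by (metis gr0I sum.neutral zero_le)
    define \<gamma>' where "\<gamma>' = \<gamma> - Poly_Mapping.single i 1"
    have \<gamma>: "\<gamma> = \<gamma>' + Poly_Mapping.single i 1"
      by (rule poly_mapping_eqI) (use i in \<open>auto simp: \<gamma>'_def lookup_add lookup_minus lookup_single when_def\<close>)
    then have "mdeg \<gamma> = mdeg \<gamma>' + 1"
      by (metis mdeg_add mdeg_single_1)
    then have "mdeg \<gamma>' \<le> a + b"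
      using Suc.prems by simp
    then obtain \<alpha> \<beta> where "\<gamma>' = \<alpha> + \<beta>" "mdeg \<alpha> \<le> a" "mdeg \<beta> \<le> b"
      using Suc.IH by blast
    moreover have "mdeg (\<alpha> + Poly_Mapping.single i 1) = mdeg \<alpha> + 1"
      by (metis mdeg_add mdeg_single_1)
    ultimately show ?thesis
      using \<gamma> by (intro exI[of _ "\<alpha> + Poly_Mapping.single i 1"] exI[of _ \<beta>]) (simp add: ac_simps)
  qed
qed

lemma mdeg_le_pdeg: "\<gamma> \<in> Poly_Mapping.keys p \<Longrightarrow> mdeg \<gamma> \<le> pdeg p"
  unfolding pdeg_def by (auto intro: Max_ge)

lemma finite_mons: "finite (mons d :: ('n::finite \<Rightarrow>\<^sub>0 nat) set)"
proof -
  have "Poly_Mapping.lookup ` (mons d :: ('n \<Rightarrow>\<^sub>0 nat) set) \<subseteq> PiE UNIV (\<lambda>_. {0..d})"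
    using lookup_le_mdeg order.trans by (fastforce simp: mons_def PiE_UNIV_domain)
  then have "finite (Poly_Mapping.lookup ` (mons d :: ('n \<Rightarrow>\<^sub>0 nat) set))"
    by (rule finite_subset) (intro finite_PiE; simp)
  moreover have "inj_on Poly_Mapping.lookup (mons d :: ('n \<Rightarrow>\<^sub>0 nat) set)"
    by (intro inj_onI poly_mapping_eqI) auto
  ultimately show ?thesis using finite_imageD by blast
qed

text \<open>Every monomial of \<open>\<psi>\<close> splits as \<open>\<alpha> + \<beta>\<close> with \<open>|\<alpha>|, |\<beta>| \<le> d\<close>, so \<open>L\<^sub>y(\<psi> h)\<close> is a
  combination of entries of the localizing matrix \<open>M\<^sub>d(h y)\<close>.\<close>
lemma riesz_mult_eq_0_if_loc_mat_eq_0: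
  fixes \<psi> h :: "'n::finite rpoly"
  assumes deg: "pdeg \<psi> \<le> 2 * d"
    and loc: "\<forall>\<alpha>\<in>mons d. \<forall>\<beta>\<in>mons d. loc_mat h y \<alpha> \<beta> = 0"
  shows "riesz y (\<psi> * h) = 0"
proof -
  have "\<psi> * h = (\<Sum>\<gamma>\<in>Poly_Mapping.keys \<psi>. h * Poly_Mapping.single \<gamma> (Poly_Mapping.lookup \<psi> \<gamma>))"
    by (subst (1) sum_single_lookup[symmetric]) (simp add: sum_distrib_left mult.commute)
  moreover have "riesz y (h * Poly_Mapping.single \<gamma> (Poly_Mapping.lookup \<psi> \<gamma>)) = 0"
    if "\<gamma> \<in> Poly_Mapping.keys \<psi>" for \<gamma>
  proof -
    have "mdeg \<gamma> \<le> d + d" using mdeg_le_pdeg[OF that] deg by simp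
    then obtain \<alpha> \<beta> where "\<gamma> = \<alpha> + \<beta>" "\<alpha> \<in> mons d" "\<beta> \<in> mons d"
      unfolding mons_def using mdeg_le_add_split by blast
    with loc show ?thesis by (simp add: riesz_mult_single loc_mat_def)
  qed
  ultimately show ?thesis by (simp add: riesz_sum)
qed

section \<open>Certificates and block traces\<close>

type_synonym 'n mon_mat = "('n \<Rightarrow>\<^sub>0 nat) \<Rightarrow> ('n \<Rightarrow>\<^sub>0 nat) \<Rightarrow> real"

definition qm_elem :: "nat \<Rightarrow> 'n::finite rpoly list \<Rightarrow> 'n mon_mat \<Rightarrow> 'n mon_mat list \<Rightarrow> 'n rpoly" where
  "qm_elem k g G0 Gs = gram_poly k G0 + (\<Sum>i<length g. g ! i * gram_poly (k - pceil (g ! i)) (Gs ! i))"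

definition posdef_blocks :: "nat \<Rightarrow> 'n::finite rpoly list \<Rightarrow> 'n mon_mat \<Rightarrow> 'n mon_mat list \<Rightarrow> bool" where
  "posdef_blocks k g G0 Gs \<longleftrightarrow> length Gs = length g \<and> posdef (mons k) G0 \<and>
     (\<forall>i<length g. posdef (mons (k - pceil (g ! i))) (Gs ! i))"

definition mat_sq_blocks :: "nat \<Rightarrow> 'n::finite rpoly list \<Rightarrow> 'n mon_mat list \<Rightarrow> 'n mon_mat list" where
  "mat_sq_blocks k g Ps = map (\<lambda>i. mat_sq (mons (k - pceil (g ! i))) (Ps ! i)) [0..<length g]"

definition block_trace ::
    "nat \<Rightarrow> 'n::finite rpoly list \<Rightarrow> 'n mon_mat \<Rightarrow> 'n mon_mat list \<Rightarrow> (('n \<Rightarrow>\<^sub>0 nat) \<Rightarrow> real) \<Rightarrow> real" where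
  "block_trace k g P0 Ps y = trace_PXP (mons k) P0 (mom_mat y) +
     (\<Sum>i<length g. trace_PXP (mons (k - pceil (g ! i))) (Ps ! i) (loc_mat (g ! i) y))"

definition loc_mats_vanish :: "nat \<Rightarrow> 'n::finite rpoly list \<Rightarrow> (('n \<Rightarrow>\<^sub>0 nat) \<Rightarrow> real) \<Rightarrow> bool" where
  "loc_mats_vanish k h y \<longleftrightarrow> (\<forall>j<length h. \<forall>\<alpha>\<in>mons (k - pceil (h ! j)). \<forall>\<beta>\<in>mons (k - pceil (h ! j)).
     loc_mat (h ! j) y \<alpha> \<beta> = 0)"

definition CTP_at :: "nat \<Rightarrow> 'n::finite rpoly list \<Rightarrow> 'n rpoly list \<Rightarrow> bool" where
  "CTP_at k g h \<longleftrightarrow> (\<exists>a>0. \<exists>P0 Ps. posdef_blocks k g P0 Ps \<and>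
     (\<forall>y. loc_mats_vanish k h y \<and> y 0 = 1 \<longrightarrow> block_trace k g P0 Ps y = a))"

lemma CTP_iff_CTP_at: "CTP f g h \<longleftrightarrow> (\<forall>k\<ge>kmin f g h. CTP_at k g h)"
  unfolding CTP_def CTP_at_def posdef_blocks_def block_trace_def loc_mats_vanish_def
  by (simp add: conj_assoc)

lemma qm_int_eq: "qm_int k g = {qm_elem k g G0 Gs | G0 Gs. posdef_blocks k g G0 Gs}"
  unfolding qm_int_def qm_elem_def posdef_blocks_def by auto

lemma QI_Nil: "QI k g [] = qm_int k g"
  unfolding QI_def trunc_ideal_def by auto

lemma gram_poly_cong:
  "(\<And>\<alpha> \<beta>. \<alpha> \<in> mons d \<Longrightarrow> \<beta> \<in> mons d \<Longrightarrow> G \<alpha> \<beta> = G' \<alpha> \<beta>) \<Longrightarrow> gram_poly d G = gram_poly d G'"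
  unfolding gram_poly_def by (intro sum.cong) auto

lemma block_trace_eq_riesz:
  assumes "posdef_blocks k g P0 Ps"
  shows "block_trace k g P0 Ps y = riesz y (qm_elem k g (mat_sq (mons k) P0) (mat_sq_blocks k g Ps))"
proof -
  have "riesz y (qm_elem k g (mat_sq (mons k) P0) (mat_sq_blocks k g Ps))
      = (\<Sum>\<alpha>\<in>mons k. \<Sum>\<beta>\<in>mons k. mat_sq (mons k) P0 \<alpha> \<beta> * mom_mat y \<alpha> \<beta>) +
        (\<Sum>i<length g. \<Sum>\<alpha>\<in>mons (k - pceil (g ! i)). \<Sum>\<beta>\<in>mons (k - pceil (g ! i)).
           (mat_sq_blocks k g Ps ! i) \<alpha> \<beta> * loc_mat (g ! i) y \<alpha> \<beta>)"
    unfolding qm_elem_def by (simp add: riesz_add riesz_sum riesz_gram_poly riesz_mult_gram_poly)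
  also have "\<dots> = block_trace k g P0 Ps y"
    using assms unfolding block_trace_def posdef_blocks_def mat_sq_blocks_def
    by (intro arg_cong2[where f = "(+)"] sum.cong refl) (simp_all add: trace_PXP_eq posdef_symmetric_on)
  finally show ?thesis by simp
qed

lemma posdef_blocks_mat_sq:
  "posdef_blocks k g P0 Ps \<Longrightarrow> posdef_blocks k g (mat_sq (mons k) P0) (mat_sq_blocks k g Ps)"
  unfolding posdef_blocks_def mat_sq_blocks_def by (simp add: posdef_mat_sq finite_mons)

lemma posdef_blocks_sqrt:
  assumes G: "posdef_blocks k g G0 Gs"
  obtains P0 Ps where "posdef_blocks k g P0 Ps"
    "qm_elem k g (mat_sq (mons k) P0) (mat_sq_blocks k g Ps) = qm_elem k g G0 Gs"
proof -
  define P0 where "P0 = mat_sqrt (mons k) G0"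
  define Ps where "Ps = map (\<lambda>i. mat_sqrt (mons (k - pceil (g ! i))) (Gs ! i)) [0..<length g]"
  have "posdef_blocks k g P0 Ps"
    using G unfolding posdef_blocks_def P0_def Ps_def by (simp add: posdef_mat_sqrt finite_mons)
  moreover have "qm_elem k g (mat_sq (mons k) P0) (mat_sq_blocks k g Ps) = qm_elem k g G0 Gs"
    using G unfolding qm_elem_def mat_sq_blocks_def P0_def Ps_def posdef_blocks_def
    by (intro arg_cong2[where f = "(+)"] sum.cong refl arg_cong2[where f = "(*)"] gram_poly_cong)
      (auto simp: mat_sq_mat_sqrt finite_mons)
  ultimately show ?thesis using that by blast
qed

lemma pconst_mult_pconst: "pconst c * pconst d = pconst (c * d)"
  unfolding pconst_def by (simp add: mult_single)

lemma lookup_pconst_mult: "Poly_Mapping.lookup (pconst c * p) \<gamma> = c * Poly_Mapping.lookup p \<gamma>"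
  by (simp add: pconst_def mult_map_scale_conv_mult[symmetric] map.rep_eq when_def)

lemma pdeg_pconst_mult_le: "pdeg (pconst c * p) \<le> pdeg p"
proof -
  have "Poly_Mapping.keys (pconst c * p) \<subseteq> Poly_Mapping.keys p"
    by (auto simp: in_keys_iff lookup_pconst_mult)
  then show ?thesis unfolding pdeg_def by (auto intro!: Max_mono)
qed

lemma qm_elem_pconst_mult:
  assumes "length Gs = length g"
  shows "pconst c * qm_elem k g G0 Gs = qm_elem k g (\<lambda>a b. c * G0 a b) (map (\<lambda>G a b. c * G a b) Gs)"
proof -
  have gram: "pconst c * gram_poly d G = gram_poly d (\<lambda>a b. c * G a b)" for d G
    unfolding gram_poly_def pconst_def by (simp add: sum_distrib_left mult_single)
  show ?thesis
    using assms unfolding qm_elem_def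
    by (simp add: distrib_left sum_distrib_left mult.left_commute[of "pconst c"] gram)
qed

lemma qm_int_pconst_mult:
  assumes "p \<in> qm_int k g" "0 < c"
  shows "pconst c * p \<in> qm_int k g"
proof -
  obtain G0 Gs where G: "posdef_blocks k g G0 Gs" and p: "p = qm_elem k g G0 Gs"
    using assms(1) unfolding qm_int_eq by blast
  have "pconst c * p = qm_elem k g (\<lambda>a b. c * G0 a b) (map (\<lambda>G a b. c * G a b) Gs)"
    using G unfolding p posdef_blocks_def by (simp add: qm_elem_pconst_mult)
  moreover have "posdef_blocks k g (\<lambda>a b. c * G0 a b) (map (\<lambda>G a b. c * G a b) Gs)"
    using G assms(2) unfolding posdef_blocks_def by (simp add: posdef_scale)
  ultimately show ?thesis unfolding qm_int_eq by blast
qed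

lemma trunc_ideal_pconst_mult:
  assumes "q \<in> trunc_ideal k h"
  shows "pconst c * q \<in> trunc_ideal k h"
proof -
  obtain \<psi>s where l: "length \<psi>s = length h"
    and deg: "\<forall>j<length h. pdeg (\<psi>s ! j) \<le> 2 * (k - pceil (h ! j))"
    and q: "q = (\<Sum>j<length h. \<psi>s ! j * h ! j)"
    using assms unfolding trunc_ideal_def by blast
  have "pconst c * q = (\<Sum>j<length h. map (\<lambda>\<psi>. pconst c * \<psi>) \<psi>s ! j * h ! j)"
    unfolding q using l by (simp add: sum_distrib_left mult.assoc)
  moreover have "\<forall>j<length h. pdeg (map (\<lambda>\<psi>. pconst c * \<psi>) \<psi>s ! j) \<le> 2 * (k - pceil (h ! j))"
    using deg l pdeg_pconst_mult_le order.trans by fastforce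
  ultimately show ?thesis
    using l unfolding trunc_ideal_def by (intro CollectI exI[of _ "map (\<lambda>\<psi>. pconst c * \<psi>) \<psi>s"]) simp
qed

lemma QI_pconst_mult:
  assumes "r \<in> QI k g h" "0 < c"
  shows "pconst c * r \<in> QI k g h"
proof -
  obtain p q where "r = p + q" "p \<in> qm_int k g" "q \<in> trunc_ideal k h"
    using assms(1) unfolding QI_def by blast
  then have "pconst c * r = pconst c * p + pconst c * q"
    and "pconst c * p \<in> qm_int k g" "pconst c * q \<in> trunc_ideal k h"
    using qm_int_pconst_mult[OF _ assms(2)] trunc_ideal_pconst_mult by (simp_all add: distrib_left)
  then show ?thesis unfolding QI_def by blast
qed

lemma pconst_in_QI_iff: "0 < \<delta> \<Longrightarrow> pconst \<delta> \<in> QI k g h \<longleftrightarrow> pconst 1 \<in> QI k g h"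
  using QI_pconst_mult[of "pconst 1" k g h \<delta>] QI_pconst_mult[of "pconst \<delta>" k g h "1 / \<delta>"]
  by (auto simp: pconst_mult_pconst)

lemma pconst_image_subset_QI_iff: "pconst ` {0<..} \<subseteq> QI k g h \<longleftrightarrow> pconst 1 \<in> QI k g h"
  using pconst_in_QI_iff by fastforce

lemma riesz_trunc_ideal: "q \<in> trunc_ideal k h \<Longrightarrow> loc_mats_vanish k h y \<Longrightarrow> riesz y q = 0"
  unfolding trunc_ideal_def loc_mats_vanish_def
  by (auto simp: riesz_sum intro!: sum.neutral riesz_mult_eq_0_if_loc_mat_eq_0)

lemma CTP_at_if_one_in_QI:
  assumes "pconst 1 \<in> QI k g h"
  shows "CTP_at k g h"
proof -
  obtain p q where 1: "pconst 1 = p + q" and p: "p \<in> qm_int k g" and q: "q \<in> trunc_ideal k h"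
    using assms unfolding QI_def by blast
  obtain G0 Gs where G: "posdef_blocks k g G0 Gs" and p_eq: "p = qm_elem k g G0 Gs"
    using p unfolding qm_int_eq by blast
  obtain P0 Ps where P: "posdef_blocks k g P0 Ps"
    and P_sq: "qm_elem k g (mat_sq (mons k) P0) (mat_sq_blocks k g Ps) = p"
    using posdef_blocks_sqrt[OF G] p_eq by metis
  have "block_trace k g P0 Ps y = 1" if "loc_mats_vanish k h y" "y 0 = 1" for y
  proof -
    have "block_trace k g P0 Ps y = riesz y p"
      using block_trace_eq_riesz[OF P] P_sq by simp
    also have "\<dots> = riesz y (pconst 1) - riesz y q"
      unfolding 1 riesz_add by simp
    also have "\<dots> = 1"
      using riesz_trunc_ideal[OF q that(1)] that(2) by (simp add: riesz_pconst)
    finally show ?thesis .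
  qed
  with P show ?thesis unfolding CTP_at_def by (intro exI[of _ 1]) auto
qed

lemma one_in_qm_int_if_CTP_at:
  assumes "CTP_at k g []"
  shows "pconst 1 \<in> qm_int k g"
proof -
  obtain a P0 Ps where a: "0 < a" and P: "posdef_blocks k g P0 Ps"
    and trace: "\<forall>y. y 0 = 1 \<longrightarrow> block_trace k g P0 Ps y = a"
    using assms unfolding CTP_at_def loc_mats_vanish_def by auto
  define p where "p = qm_elem k g (mat_sq (mons k) P0) (mat_sq_blocks k g Ps)"
  have "p \<in> qm_int k g"
    unfolding qm_int_eq p_def using posdef_blocks_mat_sq[OF P] by blast
  moreover have "p = pconst a"
    using trace block_trace_eq_riesz[OF P] unfolding p_def by (intro eq_pconst_if_riesz_const) simp
  ultimately have "pconst (1 / a) * pconst a \<in> qm_int k g"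
    using a by (intro qm_int_pconst_mult) auto
  then show ?thesis using a by (simp add: pconst_mult_pconst)
qed

lemma CTP_at_Nil_iff: "CTP_at k g [] \<longleftrightarrow> pconst ` {0<..} \<subseteq> qm_int k g"
  using CTP_at_if_one_in_QI[of k g "[]"] one_in_qm_int_if_CTP_at[of k g]
    pconst_image_subset_QI_iff[of k g "[]"]
  by (auto simp: QI_Nil)

theorem theorem1:
  fixes f :: "'n::finite rpoly" and g h :: "'n rpoly list"
  shows "(\<forall>k\<ge>kmin f g h.
            (pconst ` {0<..} \<subseteq> QI k g h \<longleftrightarrow> (\<forall>\<delta>>0. pconst \<delta> \<in> QI k g h)) \<and>
            ((\<forall>\<delta>>0. pconst \<delta> \<in> QI k g h) \<longleftrightarrow> pconst 1 \<in> QI k g h))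
       \<and> ((\<forall>k\<ge>kmin f g h. pconst ` {0<..} \<subseteq> QI k g h) \<longrightarrow> CTP f g h)
       \<and> (h = [] \<and> interior (semialg g) \<noteq> {} \<longrightarrow>
            (CTP f g h \<longleftrightarrow> (\<forall>k\<ge>kmin f g h. pconst ` {0<..} \<subseteq> qm_int k g)))"
proof (intro conjI allI impI)
  fix k
  show "pconst ` {0<..} \<subseteq> QI k g h \<longleftrightarrow> (\<forall>\<delta>>0. pconst \<delta> \<in> QI k g h)"
    by auto
  show "(\<forall>\<delta>>0. pconst \<delta> \<in> QI k g h) \<longleftrightarrow> pconst 1 \<in> QI k g h"
    using pconst_in_QI_iff by auto
next
  assume "\<forall>k\<ge>kmin f g h. pconst ` {0<..} \<subseteq> QI k g h"
  then show "CTP f g h"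
    unfolding CTP_iff_CTP_at pconst_image_subset_QI_iff by (auto intro: CTP_at_if_one_in_QI)
next
  assume "h = [] \<and> interior (semialg g) \<noteq> {}"
  then show "CTP f g h \<longleftrightarrow> (\<forall>k\<ge>kmin f g h. pconst ` {0<..} \<subseteq> qm_int k g)"
    by (simp add: CTP_iff_CTP_at CTP_at_Nil_iff)
qed

end
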